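(* Let $n$ and $s$ be sufficiently large, $k\in\mathbb N$ and $0<\varepsilon<1$. Suppose $G$ is an $n$-vertex $(\varepsilon,s)$-expander and $\frac{\varepsilon s}{k}\ge 10^5(\log n)^3$. Then there are pairwise edge-disjoint graphs $G_1,\dots,G_k$ with $E(G)=\bigcup_{i\in[k]}E(G_i)$ such that each $G_i$ has vertex set $V(G)$ and is an $\left(\frac{\varepsilon}{4},\frac{\varepsilon s}{10^4k(\log n)^2}\right)$-expander.
   Context: Logarithms are base 2. For $U\subseteq V(G)$, $N_G(U)$ is the set of vertices outside $U$ with a neighbour in $U$; $G-F$ is $G$ with edge set $F$ deleted. An $n$-vertex graph $G$ is an $(\varepsilon,s)$-expander if for every $U\subseteq V(G)$, $F\subseteq E(G)$ with $1\le|U|\le\frac23n$ and $|F|\le s|U|$ we have $|N_{G-F}(U)|\ge\varepsilon|U|/(\log n)^2$. *)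

theory Defs
  imports Main "HOL-Library.Disjoint_Sets" Complex_Main
begin

definition graph :: "'a set \<Rightarrow> 'a set set \<Rightarrow> bool" where
  "graph V E \<longleftrightarrow> finite V \<and> (\<forall>e\<in>E. e \<subseteq> V \<and> card e = 2)"

definition nbhd :: "'a set \<Rightarrow> 'a set set \<Rightarrow> 'a set \<Rightarrow> 'a set" where
  "nbhd V E U = {v \<in> V - U. \<exists>u\<in>U. {u, v} \<in> E}"

definition expander :: "'a set \<Rightarrow> 'a set set \<Rightarrow> real \<Rightarrow> real \<Rightarrow> bool" where
  "expander V E eps s \<longleftrightarrow>
     (\<forall>U F. U \<subseteq> V \<longrightarrow> F \<subseteq> E \<longrightarrow> 1 \<le> card U \<longrightarrow>
        real (card U) \<le> 2/3 * real (card V) \<longrightarrow> real (card F) \<le> s * real (card U) \<longrightarrow>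
        real (card (nbhd V (E - F) U)) \<ge> eps * real (card U) / (log 2 (real (card V)))\<^sup>2)"

end

(* Colour the edges of G uniformly at random with k colours.  A subgraph is an (eps, s)-expander
   exactly when, for every U with |U| <= 2n/3 and every W smaller than eps |U| / (log n)^2, more than
   s |U| of its edges run from U to V - U - W (take F to be those edges, and W the neighbourhood).
   In G there are m > s |U| such edges for W below the eps/4 bound.  Colour i gets at most
   t = s' |U| of them for at most (t + 1) m^t (1 - 1/k)^(m - t) k^|E| colourings, and the density
   assumption eps s / k >= 10^5 (log n)^3 turns this into n^(-6|U|) <= n^(-3(|U| + |W|)) times all
   k^|E| colourings.  Summing over the colours and all pairs (U, W) gives less than k^|E|, so some
   colouring is good for every triple, and its colour classes are (eps/4, s')-expanders. *)

theory Submission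
  imports Defs "HOL-Library.FuncSet"
begin

lemma graph_finite_edges:
  assumes "graph V E"
  shows "finite E"
  using assms unfolding graph_def by (meson Pow_iff finite_Pow_iff finite_subset subsetI)

lemma graph_card_edges_le:
  assumes "graph V E"
  shows "card E \<le> card V ^ 2"
proof -
  have finV: "finite V" using assms unfolding graph_def by simp
  have "card E \<le> card {B. B \<subseteq> V \<and> card B = 2}"
    using assms finV unfolding graph_def by (intro card_mono) auto
  also have "\<dots> = card V choose 2" using n_subsets[OF finV] .
  also have "\<dots> \<le> card V ^ 2"
    by (cases "2 \<le> card V") (simp_all add: binomial_le_pow binomial_eq_0)
  finally show ?thesis .
qed

lemma graph_card_incident_edges_le:
  assumes "graph V E" "v \<in> V"
  shows "card {e\<in>E. v \<in> e} \<le> card V - 1"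
proof -
  have finV: "finite V" using assms unfolding graph_def by simp
  have "{e\<in>E. v \<in> e} \<subseteq> (\<lambda>w. {v, w}) ` (V - {v})"
  proof
    fix e assume e: "e \<in> {e\<in>E. v \<in> e}"
    then have "e \<subseteq> V" "card e = 2" using assms(1) unfolding graph_def by auto
    then obtain x y where "e = {x, y}" "x \<noteq> y" by (meson card_2_iff)
    with e \<open>e \<subseteq> V\<close> show "e \<in> (\<lambda>w. {v, w}) ` (V - {v})"
      by (auto simp: insert_commute)
  qed
  then have "card {e\<in>E. v \<in> e} \<le> card (V - {v})"
    using finV by (meson card_image_le card_mono finite_Diff finite_imageI order_trans)
  then show ?thesis using assms(2) finV by simp
qed

lemma expanderD:
  assumes "expander V E eps s" "U \<subseteq> V" "F \<subseteq> E" "1 \<le> card U"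
    "real (card U) \<le> 2/3 * real (card V)" "real (card F) \<le> s * real (card U)"
  shows "eps * real (card U) / (log 2 (real (card V)))\<^sup>2 \<le> real (card (nbhd V (E - F) U))"
  using assms unfolding expander_def by blast

lemma expander_less_card_incident_edges:
  assumes "expander V E eps s" "0 < eps" "2 \<le> card V" "v \<in> V"
  shows "s < card {e\<in>E. v \<in> e}"
proof (rule ccontr)
  assume "\<not> ?thesis"
  then have "eps * card {v} / (log 2 (card V))\<^sup>2 \<le> card (nbhd V (E - {e\<in>E. v \<in> e}) {v})"
    using assms by (intro expanderD) auto
  moreover have "nbhd V (E - {e\<in>E. v \<in> e}) {v} = {}" unfolding nbhd_def by auto
  moreover have "0 < log 2 (card V)" using assms(3) by simp
  ultimately show False using assms(2) by (simp add: divide_le_0_iff)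
qed

definition edges_between :: "'a set set \<Rightarrow> 'a set \<Rightarrow> 'a set \<Rightarrow> 'a set set" where
  "edges_between E U X = {e\<in>E. \<exists>u\<in>U. \<exists>v\<in>X. e = {u, v}}"

text \<open>\<open>W\<close> stands for a neighbourhood of \<open>U\<close> that is too small for expansion.\<close>

definition small_separator :: "'a set \<Rightarrow> real \<Rightarrow> 'a set \<Rightarrow> 'a set \<Rightarrow> bool" where
  "small_separator V eps U W \<longleftrightarrow> U \<subseteq> V \<and> 1 \<le> card U \<and> real (card U) \<le> 2/3 * real (card V)
     \<and> W \<subseteq> V - U \<and> real (card W) < eps * real (card U) / (log 2 (real (card V)))\<^sup>2"

lemma small_separator_mono:
  assumes "small_separator V eps U W" "eps \<le> eps'"
  shows "small_separator V eps' U W"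
  using assms unfolding small_separator_def
  by (smt (verit) divide_right_mono mult_right_mono of_nat_0_le_iff zero_le_power2)

lemma expander_iff_edges_between:
  assumes "graph V E"
  shows "expander V E eps s \<longleftrightarrow>
    (\<forall>U W. small_separator V eps U W \<longrightarrow> s * card U < card (edges_between E U (V - U - W)))"
proof
  assume exp: "expander V E eps s"
  show "\<forall>U W. small_separator V eps U W \<longrightarrow> s * card U < card (edges_between E U (V - U - W))"
  proof (intro allI impI)
    fix U W assume sep: "small_separator V eps U W"
    show "s * card U < card (edges_between E U (V - U - W))"
    proof (rule ccontr)
      assume "\<not> ?thesis"
      then have "eps * card U / (log 2 (card V))\<^sup>2 \<le> card (nbhd V (E - edges_between E U (V - U - W)) U)"
        using sep unfolding small_separator_def
        by (intro expanderD[OF exp]) (auto simp: edges_between_def)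
      also have "\<dots> \<le> card W"
        using assms sep unfolding graph_def small_separator_def nbhd_def edges_between_def
        by (intro of_nat_mono card_mono) (auto intro: finite_subset)
      finally show False using sep unfolding small_separator_def by simp
    qed
  qed
next
  assume crossing: "\<forall>U W. small_separator V eps U W \<longrightarrow> s * card U < card (edges_between E U (V - U - W))"
  show "expander V E eps s"
    unfolding expander_def
  proof (intro allI impI)
    fix U F assume U: "U \<subseteq> V" "1 \<le> card U" "real (card U) \<le> 2/3 * real (card V)"
      and F: "F \<subseteq> E" "real (card F) \<le> s * real (card U)"
    define W where "W = nbhd V (E - F) U"
    show "eps * card U / (log 2 (card V))\<^sup>2 \<le> card W"
    proof (rule ccontr)
      assume "\<not> ?thesis"
      then have "small_separator V eps U W"
        using U unfolding small_separator_def W_def nbhd_def by auto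
      moreover have "edges_between E U (V - U - W) \<subseteq> F"
        unfolding W_def nbhd_def edges_between_def by blast
      then have "card (edges_between E U (V - U - W)) \<le> card F"
        using F graph_finite_edges[OF assms] by (intro card_mono) (auto intro: finite_subset)
      ultimately show False using crossing F by fastforce
    qed
  qed
qed

lemma sum_power_card_Pow:
  fixes x :: "'b::comm_semiring_1"
  assumes "finite V"
  shows "(\<Sum>U\<in>Pow V. x ^ card U) = (1 + x) ^ card V"
  using prod_add[OF assms, of "\<lambda>_. x" "\<lambda>_. 1"] by (simp add: add.commute)

lemma card_subsets_card_le:
  assumes "finite T" "T \<noteq> {}"
  shows "card {A. A \<subseteq> T \<and> card A \<le> t} \<le> (t + 1) * card T ^ t"
proof -
  have "{A. A \<subseteq> T \<and> card A \<le> t} = (\<Union>j\<le>t. {A. A \<subseteq> T \<and> card A = j})" by auto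
  then have "card {A. A \<subseteq> T \<and> card A \<le> t} \<le> (\<Sum>j\<le>t. card T choose j)"
    using card_UN_le[of "{..t}" "\<lambda>j. {A. A \<subseteq> T \<and> card A = j}"] n_subsets[OF assms(1)] by simp
  also have "\<dots> \<le> (\<Sum>j\<le>t. card T ^ t)"
  proof (rule sum_mono)
    fix j assume "j \<in> {..t}"
    have "card T choose j \<le> card T ^ j"
      by (cases "j \<le> card T") (simp_all add: binomial_le_pow binomial_eq_0)
    also have "\<dots> \<le> card T ^ t"
      using \<open>j \<in> {..t}\<close> assms by (intro power_increasing) (auto simp: Suc_le_eq card_gt_0_iff)
    finally show "card T choose j \<le> card T ^ t" .
  qed
  finally show ?thesis by simp
qed

lemma card_colourings_avoiding:
  assumes "finite E" "S \<subseteq> E" "i \<in> {1..k}"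
  shows "real (card {c \<in> E \<rightarrow>\<^sub>E {1..k}. \<forall>e\<in>S. c e \<noteq> i})
    = (1 - 1 / real k) ^ card S * real k ^ card E"
proof -
  have k: "1 \<le> k" using assms(3) by simp
  have "{c \<in> E \<rightarrow>\<^sub>E {1..k}. \<forall>e\<in>S. c e \<noteq> i} = PiE E (\<lambda>e. if e \<in> S then {1..k} - {i} else {1..k})"
    using assms(2) by (auto simp: PiE_iff extensional_def split: if_splits)
  then have "card {c \<in> E \<rightarrow>\<^sub>E {1..k}. \<forall>e\<in>S. c e \<noteq> i} = (\<Prod>e\<in>E. if e \<in> S then k - 1 else k)"
    using assms(3) by (simp add: card_PiE[OF assms(1)]) (intro prod.cong, auto)
  also have "\<dots> = (k - 1) ^ card S * k ^ card (E - S)"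
    using assms(1,2) by (simp add: prod.If_cases Int_absorb1 Diff_eq[symmetric])
  finally have "real (card {c \<in> E \<rightarrow>\<^sub>E {1..k}. \<forall>e\<in>S. c e \<noteq> i})
      = ((1 - 1 / real k) * real k) ^ card S * real k ^ card (E - S)"
    using k by (simp add: of_nat_diff algebra_simps)
  also have "\<dots> = (1 - 1 / real k) ^ card S * real k ^ card E"
    using assms(1,2) by (simp add: power_mult_distrib card_Diff_subset finite_subset card_mono
        flip: mult.assoc power_add)
  finally show ?thesis .
qed

lemma card_colourings_few_of_colour:
  assumes "finite E" "T \<subseteq> E" "T \<noteq> {}" "i \<in> {1..k}"
  shows "real (card {c \<in> E \<rightarrow>\<^sub>E {1..k}. card {e\<in>T. c e = i} \<le> t})
    \<le> (real t + 1) * real (card T) ^ t * (1 - 1 / real k) ^ (card T - t) * real k ^ card E"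
proof -
  define \<A> where "\<A> = {A. A \<subseteq> T \<and> card A \<le> t}"
  define Avoid where "Avoid A = {c \<in> E \<rightarrow>\<^sub>E {1..k}. \<forall>e\<in>T - A. c e \<noteq> i}" for A
  have finT: "finite T" using assms(1,2) finite_subset by blast
  have fin\<A>: "finite \<A>" unfolding \<A>_def using finT by simp
  have "{c \<in> E \<rightarrow>\<^sub>E {1..k}. card {e\<in>T. c e = i} \<le> t} \<subseteq> (\<Union>A\<in>\<A>. Avoid A)"
  proof
    fix c assume "c \<in> {c \<in> E \<rightarrow>\<^sub>E {1..k}. card {e\<in>T. c e = i} \<le> t}"
    then have "{e\<in>T. c e = i} \<in> \<A>" "c \<in> Avoid {e\<in>T. c e = i}"
      unfolding \<A>_def Avoid_def by auto
    then show "c \<in> (\<Union>A\<in>\<A>. Avoid A)" by blast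
  qed
  then have "card {c \<in> E \<rightarrow>\<^sub>E {1..k}. card {e\<in>T. c e = i} \<le> t} \<le> card (\<Union>A\<in>\<A>. Avoid A)"
    using fin\<A> assms(1) by (intro card_mono) (auto simp: Avoid_def finite_PiE)
  also have "\<dots> \<le> (\<Sum>A\<in>\<A>. card (Avoid A))"
    using fin\<A> by (rule card_UN_le)
  finally have "real (card {c \<in> E \<rightarrow>\<^sub>E {1..k}. card {e\<in>T. c e = i} \<le> t})
      \<le> (\<Sum>A\<in>\<A>. real (card (Avoid A)))"
    by (simp flip: of_nat_sum)
  also have "\<dots> = (\<Sum>A\<in>\<A>. (1 - 1 / real k) ^ card (T - A) * real k ^ card E)"
    unfolding Avoid_def using assms by (intro sum.cong refl card_colourings_avoiding) auto
  also have "\<dots> \<le> (\<Sum>A\<in>\<A>. (1 - 1 / real k) ^ (card T - t) * real k ^ card E)"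
  proof (intro sum_mono mult_right_mono power_decreasing)
    fix A assume "A \<in> \<A>"
    then show "card T - t \<le> card (T - A)"
      unfolding \<A>_def using finT by (auto simp: card_Diff_subset finite_subset)
  qed (use assms(4) in auto)
  also have "\<dots> = card \<A> * ((1 - 1 / real k) ^ (card T - t) * real k ^ card E)"
    by simp
  also have "\<dots> \<le> (real t + 1) * real (card T) ^ t * ((1 - 1 / real k) ^ (card T - t) * real k ^ card E)"
  proof (rule mult_right_mono)
    have "card \<A> \<le> (t + 1) * card T ^ t"
      unfolding \<A>_def by (rule card_subsets_card_le[OF finT assms(3)])
    from of_nat_mono[OF this, where 'a=real]
    show "real (card \<A>) \<le> (real t + 1) * real (card T) ^ t" by (simp add: distrib_right)
  qed (use assms(4) in simp)
  finally show ?thesis by (simp add: mult.assoc)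
qed

lemma few_of_colour_exp_bound:
  fixes a b M :: real and k t m :: nat
  assumes "real t \<le> a" "t \<le> m" "real m \<le> M" "1 \<le> M" "b \<le> real m" "1 \<le> k"
  shows "(real t + 1) * real m ^ t * (1 - 1 / real k) ^ (m - t) \<le> exp (a + a * ln M - (b - a) / k)"
proof -
  have "real t + 1 \<le> exp (real t)"
    using exp_ge_add_one_self[of "real t"] by (simp add: add.commute)
  moreover have "real m ^ t \<le> exp (real t * ln M)"
    using assms(3,4) power_mono[OF assms(3), of t] by (simp add: exp_of_nat_mult)
  moreover have "(1 - 1 / real k) ^ (m - t) \<le> exp (- (1 / real k)) ^ (m - t)"
    using exp_ge_add_one_self[of "- (1 / real k)"] assms(6) by (intro power_mono) auto
  ultimately have "(real t + 1) * real m ^ t * (1 - 1 / real k) ^ (m - t)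
      \<le> exp (real t) * exp (real t * ln M) * exp (- (1 / real k)) ^ (m - t)"
    using assms(6) by (intro mult_mono) auto
  also have "\<dots> = exp (real t + real t * ln M - real (m - t) / real k)"
    by (simp add: exp_add exp_diff exp_minus field_simps flip: exp_of_nat_mult)
  also have "\<dots> \<le> exp (a + a * ln M - (b - a) / k)"
    using assms mult_right_mono[OF assms(1) ln_ge_zero[OF assms(4)]]
      divide_right_mono[of "b - a" "real (m - t)" k]
    by (simp add: of_nat_diff)
  finally show ?thesis .
qed

lemma union_bound_exists:
  assumes "finite A" "finite I" "\<And>p. p \<in> I \<Longrightarrow> B p \<subseteq> A" "(\<Sum>p\<in>I. card (B p)) < card A"
  shows "\<exists>a\<in>A. \<forall>p\<in>I. a \<notin> B p"
proof (rule ccontr)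
  assume "\<not> ?thesis"
  then have "A = (\<Union>p\<in>I. B p)" using assms(3) by blast
  then have "card A \<le> (\<Sum>p\<in>I. card (B p))"
    using card_UN_le[OF assms(2)] by metis
  with assms(4) show False by simp
qed

lemma sum_colour_subset_pair_weights:
  fixes x :: real and k :: nat
  assumes "finite V"
  shows "(\<Sum>(i, U, W)\<in>{1..k} \<times> (Pow V - {{}}) \<times> Pow V. x ^ card U * x ^ card W)
    = k * ((1 + x) ^ card V - 1) * (1 + x) ^ card V"
proof -
  have "(\<Sum>(i, U, W)\<in>{1..k} \<times> (Pow V - {{}}) \<times> Pow V. x ^ card U * x ^ card W)
      = (\<Sum>i\<in>{1..k}. \<Sum>U\<in>Pow V - {{}}. \<Sum>W\<in>Pow V. x ^ card U * x ^ card W)"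
    by (simp add: sum.cartesian_product')
  also have "\<dots> = k * ((\<Sum>U\<in>Pow V - {{}}. x ^ card U) * (\<Sum>W\<in>Pow V. x ^ card W))"
    by (simp add: sum_product)
  also have "\<dots> = k * ((1 + x) ^ card V - 1) * (1 + x) ^ card V"
    using sum_power_card_Pow[OF assms, of x] assms by (simp add: sum_diff1)
  finally show ?thesis .
qed

lemma colour_subset_pair_weights_lt_one:
  fixes n k :: nat
  assumes "16 \<le> n" "k < n"
  shows "k * ((1 + 1 / real n ^ 3) ^ n - 1) * (1 + 1 / real n ^ 3) ^ n < 1"
proof -
  define Y where "Y = (1 + 1 / real n ^ 3) ^ n"
  have n2: "256 \<le> real n ^ 2" using power_mono[of 16 "real n" 2] assms(1) by simp
  have "Y \<le> exp (1 / real n ^ 3) ^ n"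
    unfolding Y_def using exp_ge_add_one_self[of "1 / real n ^ 3"] by (intro power_mono) auto
  also have "\<dots> = exp (real n * (1 / real n ^ 3))"
    by (rule exp_of_nat_mult[symmetric])
  also have "real n * (1 / real n ^ 3) = 1 / real n ^ 2"
    using assms(1) by (simp add: power2_eq_square power3_eq_cube)
  also have "exp (1 / real n ^ 2) \<le> 1 + 2 / real n ^ 2"
    using exp_bound_lemma[of "1 / real n ^ 2"] n2 by (simp add: divide_le_eq)
  finally have Y_le: "Y \<le> 1 + 2 / real n ^ 2" .
  moreover have "1 \<le> Y" unfolding Y_def by simp
  moreover have "2 / real n ^ 2 \<le> 1" using n2 by (simp add: divide_le_eq)
  ultimately have "k * (Y - 1) * Y \<le> k * (2 / real n ^ 2) * 2"
    by (intro mult_mono) auto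
  also have "\<dots> < n * (2 / real n ^ 2) * 2"
    using assms by (intro mult_strict_right_mono) auto
  also have "\<dots> = 4 / real n" using assms(1) by (simp add: power2_eq_square)
  also have "\<dots> \<le> 1" using assms(1) by simp
  finally show ?thesis unfolding Y_def .
qed

lemma crossing_exponent_bound:
  fixes L l K s eps u :: real
  assumes "1 \<le> L" "0 \<le> l" "l \<le> L" "1 \<le> K" "10^5 * L^3 \<le> s / K"
    "0 \<le> eps" "eps \<le> 1" "0 \<le> u"
  defines "a \<equiv> eps * s / (10^4 * K * L^2) * u"
  shows "a + a * (2 * l) - (s * u - a) / K \<le> - (6 * l * u)"
proof -
  define \<sigma> where "\<sigma> = s / K"
  have "1 \<le> L^3" using assms(1) by simp
  then have \<sigma>: "10^5 * L \<le> \<sigma>"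
    using assms(1,5) power_increasing[of 1 3 L] unfolding \<sigma>_def by simp
  have a: "a = eps * (\<sigma> * u / (10^4 * L^2))"
    unfolding a_def \<sigma>_def using assms(4) by (simp add: field_simps)
  have "0 \<le> \<sigma> * u / (10^4 * L^2)" using \<sigma> assms(1,8) by simp
  then have a_nonneg: "0 \<le> a" and a_le: "a \<le> \<sigma> * u / (10^4 * L^2)"
    unfolding a using assms(6,7) by (simp_all only: mult_nonneg_nonneg mult_left_le_one_le)
  have "a / K \<le> a" using a_nonneg assms(4) by (simp add: divide_le_eq mult_le_cancel_left1)
  moreover have "(s * u - a) / K = \<sigma> * u - a / K"
    unfolding \<sigma>_def using assms(4) by (simp add: diff_divide_distrib)
  moreover have "a * (2 * l) \<le> a * (2 * L)" "a * 2 \<le> a * (2 * L)"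
    using a_nonneg assms(1,3) by (simp_all add: mult_left_mono)
  ultimately have "a + a * (2 * l) - (s * u - a) / K \<le> a * (4 * L) - \<sigma> * u"
    by linarith
  also have "\<dots> \<le> \<sigma> * u / (10^4 * L^2) * (4 * L) - \<sigma> * u"
    using mult_right_mono[OF a_le, of "4 * L"] assms(1) by simp
  also have "\<dots> = \<sigma> * u * (4 / (10^4 * L) - 1)"
    using assms(1) by (simp add: field_simps power2_eq_square)
  also have "\<dots> \<le> \<sigma> * u * (- 1/2)"
    using \<sigma> assms(1,8) by (intro mult_left_mono) (auto simp: field_simps)
  also have "\<dots> \<le> - (6 * l * u)"
  proof -
    have "12 * l \<le> \<sigma>" using \<sigma> assms(1,3) by simp
    then show ?thesis using mult_right_mono[OF _ assms(8)] by fastforce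
  qed
  finally show ?thesis .
qed

locale expander_split =
  fixes V :: "'a set" and E :: "'a set set" and eps s :: real and k :: nat
  assumes graph: "graph V E" and expander: "expander V E eps s"
    and card_V_ge: "16 \<le> card V" and k_ge: "1 \<le> k" and eps_pos: "0 < eps" and eps_less: "eps < 1"
    and density: "10^5 * (log 2 (real (card V)))^3 \<le> eps * s / k"
begin

abbreviation L :: real where "L \<equiv> log 2 (real (card V))"

abbreviation s' :: real where "s' \<equiv> eps * s / (10^4 * real k * L^2)"

lemma log_card_V_ge: "4 \<le> L"
  using card_V_ge by (simp add: le_log_iff)

lemma s_pos: "0 < s"
proof -
  have "0 < eps * s / k" using density log_card_V_ge by (smt (verit) zero_less_power mult_pos_pos)
  then show ?thesis using eps_pos k_ge by (simp add: zero_less_divide_iff zero_less_mult_iff)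
qed

lemma s_over_k_ge: "10^5 * L^3 \<le> s / k"
proof -
  have "eps * s / k \<le> s / k" using eps_less s_pos by (simp add: divide_right_mono)
  then show ?thesis using density by linarith
qed

lemma k_less_card_V: "k < card V"
proof -
  obtain v where v: "v \<in> V" using card_V_ge by fastforce
  have "1 \<le> L^3" using log_card_V_ge by simp
  then have "1 \<le> 10^5 * L^3" by simp
  then have "real k \<le> 10^5 * L^3 * real k" using mult_right_mono[of 1 _ "real k"] by simp
  also have "\<dots> \<le> s" using s_over_k_ge k_ge by (simp add: le_divide_eq)
  also have "s < card {e\<in>E. v \<in> e}"
    using expander eps_pos card_V_ge v by (intro expander_less_card_incident_edges) auto
  also have "card {e\<in>E. v \<in> e} \<le> card V - 1" using graph_card_incident_edges_le[OF graph v] .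
  finally show ?thesis by linarith
qed

lemma s'_bounds: "0 \<le> s'" "s' \<le> s"
proof -
  show "0 \<le> s'" using eps_pos s_pos by simp
  have "1 * 1 \<le> real k * L^2"
    using k_ge log_card_V_ge by (intro mult_mono) (simp_all add: one_le_power)
  then have "s' \<le> eps * s / 1"
    using eps_pos s_pos by (intro divide_left_mono) auto
  also have "\<dots> \<le> s" using mult_left_le_one_le[of s eps] eps_pos eps_less s_pos by simp
  finally show "s' \<le> s" .
qed

lemma small_separator_card_le:
  assumes "small_separator V (eps / 4) U W"
  shows "card W \<le> card U"
proof -
  have "1 \<le> L^2" using log_card_V_ge by simp
  then have "eps / 4 * card U / L^2 \<le> eps / 4 * card U / 1"
    using eps_pos by (intro divide_left_mono) auto
  also have "\<dots> \<le> card U" using mult_left_le_one_le[of "card U" "eps / 4"] eps_pos eps_less by simp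
  finally show ?thesis using assms unfolding small_separator_def by linarith
qed

definition bad_colourings :: "nat \<times> 'a set \<times> 'a set \<Rightarrow> ('a set \<Rightarrow> nat) set" where
  "bad_colourings = (\<lambda>(i, U, W). {c \<in> E \<rightarrow>\<^sub>E {1..k}.
     real (card (edges_between {e\<in>E. c e = i} U (V - U - W))) \<le> s' * card U})"

lemma exp_crossing_bound:
  fixes u :: nat
  shows "exp (s' * u + s' * u * ln (real (card V) ^ 2) - (s * u - s' * u) / k)
    \<le> (1 / real (card V) ^ 3) ^ (2 * u)"
proof -
  define n where "n = real (card V)"
  have "0 < n" using card_V_ge unfolding n_def by simp
  have "ln n * ln 2 \<le> ln n"
    using card_V_ge ln_2_less_1 unfolding n_def by (intro mult_left_le) auto
  then have "ln n \<le> L" unfolding n_def log_def by (simp add: le_divide_eq)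
  then have "s' * u + s' * u * ln (n ^ 2) - (s * u - s' * u) / k \<le> - (6 * ln n * u)"
    using crossing_exponent_bound[of L "ln n" k s eps u] log_card_V_ge k_ge s_over_k_ge
      eps_pos eps_less card_V_ge \<open>0 < n\<close>
    unfolding n_def by (simp add: ln_realpow mult.assoc)
  then have "exp (s' * u + s' * u * ln (n ^ 2) - (s * u - s' * u) / k) \<le> exp (- (6 * ln n * u))"
    by simp
  also have "\<dots> = exp (- ln n) ^ (6 * u)"
    by (simp add: exp_of_nat_mult[symmetric] algebra_simps)
  also have "\<dots> = (1 / n ^ 3) ^ (2 * u)"
    using \<open>0 < n\<close> by (simp add: exp_minus inverse_eq_divide power_one_over power_mult[symmetric] mult.commute)
  finally show ?thesis unfolding n_def .
qed

lemma card_bad_colourings_le: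
  assumes "i \<in> {1..k}" "small_separator V (eps / 4) U W"
  shows "real (card (bad_colourings (i, U, W)))
    \<le> real k ^ card E * (1 / real (card V) ^ 3) ^ (card U + card W)"
proof -
  define u where "u = card U"
  define T where "T = edges_between E U (V - U - W)"
  define a where "a = s' * u"
  define t where "t = nat \<lfloor>a\<rfloor>"
  have "small_separator V eps U W" using small_separator_mono[OF assms(2), of eps] eps_pos by simp
  then have "s * u < card T"
    using expander graph unfolding T_def u_def by (simp add: expander_iff_edges_between)
  moreover have "a \<le> s * u" unfolding a_def by (rule mult_right_mono[OF s'_bounds(2)]) simp
  moreover have "0 \<le> a" unfolding a_def using s'_bounds(1) by (rule mult_nonneg_nonneg) simp
  ultimately have "real t \<le> a" "t \<le> card T" "T \<noteq> {}" unfolding t_def by (linarith, linarith, force)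
  have "T \<subseteq> E" unfolding T_def edges_between_def by auto
  then have "real (card T) \<le> real (card V) ^ 2"
    using graph_card_edges_le[OF graph] card_mono[OF graph_finite_edges[OF graph]]
    by (metis of_nat_le_iff of_nat_power order_trans)
  have "edges_between {e\<in>E. c e = i} U (V - U - W) = {e\<in>T. c e = i}" for c
    unfolding T_def edges_between_def by auto
  moreover have "real m \<le> a \<longleftrightarrow> m \<le> t" for m
    unfolding t_def using \<open>0 \<le> a\<close> by (simp add: le_nat_iff le_floor_iff)
  ultimately have "bad_colourings (i, U, W) = {c \<in> E \<rightarrow>\<^sub>E {1..k}. card {e\<in>T. c e = i} \<le> t}"
    unfolding bad_colourings_def a_def u_def by simp
  then have "real (card (bad_colourings (i, U, W)))
      \<le> (real t + 1) * real (card T) ^ t * (1 - 1 / real k) ^ (card T - t) * real k ^ card E"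
    using card_colourings_few_of_colour[OF graph_finite_edges[OF graph] \<open>T \<subseteq> E\<close> \<open>T \<noteq> {}\<close> assms(1)]
    by (simp only:)
  also have "\<dots> \<le> exp (a + a * ln (real (card V) ^ 2) - (s * u - a) / k) * real k ^ card E"
    using \<open>real t \<le> a\<close> \<open>t \<le> card T\<close> \<open>real (card T) \<le> real (card V) ^ 2\<close> \<open>s * u < card T\<close>
      k_ge card_V_ge
    by (intro mult_right_mono few_of_colour_exp_bound) auto
  also have "\<dots> \<le> (1 / real (card V) ^ 3) ^ (2 * u) * real k ^ card E"
    using exp_crossing_bound[of u] unfolding a_def by (intro mult_right_mono) auto
  also have "\<dots> \<le> (1 / real (card V) ^ 3) ^ (card U + card W) * real k ^ card E"
    using small_separator_card_le[OF assms(2)] card_V_ge unfolding u_def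
    by (intro mult_right_mono power_decreasing) auto
  finally show ?thesis by (simp add: mult.commute)
qed

lemma sum_card_bad_colourings_less:
  "(\<Sum>p\<in>{(i, U, W). i \<in> {1..k} \<and> small_separator V (eps / 4) U W}. card (bad_colourings p))
    < card (E \<rightarrow>\<^sub>E {1..k})"
proof -
  define x where "x = 1 / real (card V) ^ 3"
  define I where "I = {(i, U, W). i \<in> {1..k} \<and> small_separator V (eps / 4) U W}"
  define J where "J = {1..k} \<times> (Pow V - {{}}) \<times> Pow V"
  have finV: "finite V" using graph unfolding graph_def by simp
  have "I \<subseteq> J" unfolding I_def J_def small_separator_def by fastforce
  have "(\<Sum>p\<in>I. real (card (bad_colourings p)))
      \<le> (\<Sum>(i, U, W)\<in>I. real k ^ card E * (x ^ card U * x ^ card W))"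
  proof (rule sum_mono)
    fix p assume "p \<in> I"
    then obtain i U W where "p = (i, U, W)" "i \<in> {1..k}" "small_separator V (eps / 4) U W"
      unfolding I_def by auto
    with card_bad_colourings_le[of i U W]
    show "real (card (bad_colourings p))
        \<le> (case p of (i, U, W) \<Rightarrow> real k ^ card E * (x ^ card U * x ^ card W))"
      unfolding x_def by (simp add: power_add)
  qed
  also have "\<dots> \<le> (\<Sum>(i, U, W)\<in>J. real k ^ card E * (x ^ card U * x ^ card W))"
    using \<open>I \<subseteq> J\<close> finV unfolding J_def x_def by (intro sum_mono2) auto
  also have "\<dots> = real k ^ card E * (\<Sum>(i, U, W)\<in>J. x ^ card U * x ^ card W)"
    by (simp add: sum_distrib_left split_def)
  also have "\<dots> = real k ^ card E * (k * ((1 + x) ^ card V - 1) * (1 + x) ^ card V)"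
    unfolding J_def using sum_colour_subset_pair_weights[OF finV, of x k] by simp
  also have "\<dots> < real k ^ card E"
    using colour_subset_pair_weights_lt_one[OF card_V_ge k_less_card_V] k_ge unfolding x_def by simp
  finally have "real (\<Sum>p\<in>I. card (bad_colourings p)) < real (k ^ card E)"
    by simp
  then show ?thesis
    unfolding I_def using graph_finite_edges[OF graph]
    by (simp only: of_nat_less_iff card_PiE prod_constant card_atLeastAtMost diff_Suc_1)
qed

lemma exists_good_colouring:
  "\<exists>c\<in>E \<rightarrow>\<^sub>E {1..k}. \<forall>i\<in>{1..k}. \<forall>U W. small_separator V (eps / 4) U W \<longrightarrow>
     s' * card U < card (edges_between {e\<in>E. c e = i} U (V - U - W))"
proof -
  define I where "I = {(i, U, W). i \<in> {1..k} \<and> small_separator V (eps / 4) U W}"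
  have finV: "finite V" using graph unfolding graph_def by simp
  have "I \<subseteq> {1..k} \<times> Pow V \<times> Pow V" unfolding I_def small_separator_def by blast
  moreover have "finite ({1..k} \<times> Pow V \<times> Pow V)" using finV by simp
  ultimately have "finite I" by (rule finite_subset)
  have "finite (E \<rightarrow>\<^sub>E {1..k})" using graph_finite_edges[OF graph] by (simp add: finite_PiE)
  moreover have "bad_colourings p \<subseteq> E \<rightarrow>\<^sub>E {1..k}" if "p \<in> I" for p
    unfolding bad_colourings_def by (auto split: prod.split)
  ultimately obtain c where c: "c \<in> E \<rightarrow>\<^sub>E {1..k}" and good: "\<forall>p\<in>I. c \<notin> bad_colourings p"
    using union_bound_exists[OF _ \<open>finite I\<close> _ sum_card_bad_colourings_less[folded I_def]] by blast
  have "s' * card U < card (edges_between {e\<in>E. c e = i} U (V - U - W))"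
    if "i \<in> {1..k}" "small_separator V (eps / 4) U W" for i U W
    using good c that unfolding I_def bad_colourings_def by (fastforce simp: not_le)
  then have "\<forall>i\<in>{1..k}. \<forall>U W. small_separator V (eps / 4) U W \<longrightarrow>
      s' * card U < card (edges_between {e\<in>E. c e = i} U (V - U - W))"
    by blast
  with c show ?thesis by blast
qed

theorem expander_decomposition:
  "\<exists>Es :: nat \<Rightarrow> 'a set set. disjoint_family_on Es {1..k} \<and> E = (\<Union>i\<in>{1..k}. Es i) \<and>
     (\<forall>i\<in>{1..k}. graph V (Es i) \<and> expander V (Es i) (eps / 4) s')"
proof -
  obtain c where c: "c \<in> E \<rightarrow>\<^sub>E {1..k}" and crossing:
    "\<And>i U W. i \<in> {1..k} \<Longrightarrow> small_separator V (eps / 4) U W \<Longrightarrow>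
       s' * card U < card (edges_between {e\<in>E. c e = i} U (V - U - W))"
    using exists_good_colouring by blast
  have class_graph: "graph V {e\<in>E. c e = i}" for i using graph unfolding graph_def by auto
  have "expander V {e\<in>E. c e = i} (eps / 4) s'" if "i \<in> {1..k}" for i
    unfolding expander_iff_edges_between[OF class_graph] using crossing[OF that] by blast
  moreover have "E = (\<Union>i\<in>{1..k}. {e\<in>E. c e = i})" using c by (auto simp: PiE_iff)
  moreover have "disjoint_family_on (\<lambda>i. {e\<in>E. c e = i}) {1..k}"
    unfolding disjoint_family_on_def by auto
  ultimately show ?thesis using class_graph by blast
qed

end

theorem mainTheorem16:
  "\<exists>N0 S0::real. \<forall>(V::'a set) E (k::nat) (eps::real) (s::real).
     graph V E \<longrightarrow> real (card V) \<ge> N0 \<longrightarrow> s \<ge> S0 \<longrightarrow> k \<ge> 1 \<longrightarrow>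
     0 < eps \<longrightarrow> eps < 1 \<longrightarrow> expander V E eps s \<longrightarrow>
     eps * s / real k \<ge> 10^5 * (log 2 (real (card V)))^3 \<longrightarrow>
     (\<exists>Es :: nat \<Rightarrow> 'a set set.
        disjoint_family_on Es {1..k} \<and>
        E = (\<Union>i\<in>{1..k}. Es i) \<and>
        (\<forall>i\<in>{1..k}. graph V (Es i) \<and>
           expander V (Es i) (eps / 4) (eps * s / (10^4 * real k * (log 2 (real (card V)))^2))))"
proof (intro exI[of _ 16] exI[of _ 0] allI impI)
  \<comment> \<open>No lower bound on \<open>s\<close> is needed: the density hypothesis already gives \<open>s \<ge> k\<close>.\<close>
  fix V :: "'a set" and E k eps s
  assume "graph V E" "16 \<le> real (card V)" "1 \<le> k" "0 < eps" "eps < 1" "expander V E eps s"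
    "10^5 * (log 2 (real (card V)))^3 \<le> eps * s / real k"
  then interpret expander_split V E eps s k by unfold_locales auto
  show "\<exists>Es :: nat \<Rightarrow> 'a set set. disjoint_family_on Es {1..k} \<and> E = (\<Union>i\<in>{1..k}. Es i) \<and>
      (\<forall>i\<in>{1..k}. graph V (Es i) \<and>
         expander V (Es i) (eps / 4) (eps * s / (10^4 * real k * (log 2 (real (card V)))^2)))"
    by (rule expander_decomposition)
qed

end
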